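(* Let $k\ge2$ and $n\le0$, and write $q=q_{n,k}$, $r=r_{n,k}$. Set $$d_{n,k}=\begin{cases}|n|+1-k,& r=0,\\ |n|+1-kr,& 1\le r\le k-1.\end{cases}$$ Then $\mathcal{F}_{n,k}\equiv0$ if and only if $d_{n,k}<0$. If $d_{n,k}\ge0$, then $\mathcal{F}_{n,k}(x)$ has degree exactly $d_{n,k}$, and its leading term is $x^{|n|+1-k}$ when $r=0$, and $(-1)^r\binom{q-1}{r-1}x^{|n|+1-kr}$ when $1\le r\le k-1$. In particular, for $k\ge3$ the degree of the nonvanishing polynomials $\mathcal{F}_{n,k}$, $n<0$, is not a monotonically nondecreasing function of $|n|$.
   Context: For $k\ge2$, the polynomials $\mathcal{F}_{n,k}(x)\in\mathbb{Z}[x]$ ($n\in\mathbb{Z}$) are defined by $\mathcal{F}_{1,k}=1$, $\mathcal{F}_{n,k}=0$ for $n=0,-1,\dots,-(k-2)$, and $\mathcal{F}_{n,k}(x)=\sum_{j=1}^{k}x^{k-j}\mathcal{F}_{n-j,k}(x)$ for all $n\in\mathbb{Z}$. This recurrence is used upwards for $n\ge2$, and downwards for $n\le-(k-1)$ as $\mathcal{F}_{n,k}=\mathcal{F}_{n+k,k}-\sum_{j=1}^{k-1}x^j\mathcal{F}_{n+j,k}$. For $n\le0$, set $q_{n,k}=\lfloor(|n|+1)/k\rfloor$ and let $r_{n,k}\in\{0,\dots,k-1\}$ be the residue of $|n|+1$ modulo $k$. Then $|n|+1=kq_{n,k}+r_{n,k}$. *)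

theory Defs
  imports "HOL-Computational_Algebra.Polynomial"
begin

text \<open>Values F_{n,k} for n = 1 - m (m :: nat), i.e. n \<le> 1, computed by the downward
  recursion F_{n} = F_{n+k} - sum_{j=1}^{k-1} x^j F_{n+j}, with F_1 = 1 and
  F_0 = ... = F_{-(k-2)} = 0.  (The case k = 0 is irrelevant and set to 0.)\<close>
fun Fdown :: "nat \<Rightarrow> nat \<Rightarrow> int poly" where
  "Fdown k m =
     (if k = 0 then 0
      else if m = 0 then 1
      else if m < k then 0
      else Fdown k (m - k) - sum_list (map (\<lambda>j. monom 1 j * Fdown k (m - j)) [1..<k]))"

function F :: "nat \<Rightarrow> int \<Rightarrow> int poly" where
  "F k n =
     (if n \<le> 1 then Fdown k (nat (1 - n))
      else sum_list (map (\<lambda>j. monom 1 (k - j) * F k (n - int j)) [1..<k+1]))"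
  by pat_completeness auto
termination
  by (relation "measure (\<lambda>(k, n). nat n)") auto

end

theory Submission
  imports Defs
begin

text \<open>Write G N for F (1 - N), i.e. Fdown k N. Subtracting x times the defining relation at
  N from the one at N + 1 telescopes to G (N + k + 1) = (1 + x^k) G (N + 1) - x G N.
  By induction on q one follows the top term of G (k q + r), 0 \<le> r < k: the factor
  1 + x^k lifts the top term of G (N + 1) by exactly k, and apart from G (k + 1) = -x the
  term x G N reaches the same degree only when r \<ge> 2. There the top coefficients obey
  Pascal's rule, which produces (-1)^r C(q - 1, r - 1); for q < r every term vanishes.\<close>

declare Fdown.simps[simp del] F.simps[simp del]

text \<open>p has coefficient c at x^d and none above; with c = 0 this is a strict degree bound.\<close>
definition top_term :: "'a::zero poly \<Rightarrow> nat \<Rightarrow> 'a \<Rightarrow> bool" where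
  "top_term p d c \<longleftrightarrow> (\<forall>i\<ge>d. coeff p i = (if i = d then c else 0))"

lemma top_term_degree:
  assumes "top_term p d c" "c \<noteq> 0"
  shows "degree p = d \<and> lead_coeff p = c"
proof -
  have "degree p \<le> d"
    using assms(1) unfolding top_term_def by (intro degree_le) auto
  moreover have "coeff p d = c"
    using assms(1) unfolding top_term_def by simp
  ultimately show ?thesis
    using assms(2) le_degree[of p d] by simp
qed

lemma top_term_0 [simp]: "top_term 0 d 0"
  by (simp add: top_term_def)

lemma top_term_above:
  "top_term p d c \<Longrightarrow> d < e \<Longrightarrow> top_term p e 0"
  by (simp add: top_term_def)

lemma top_term_add:
  "top_term p d a \<Longrightarrow> top_term q d b \<Longrightarrow> top_term (p + q) d (a + b)"
  by (simp add: top_term_def)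

lemma top_term_diff:
  fixes p q :: "'a::ab_group_add poly"
  shows "top_term p d a \<Longrightarrow> top_term q d b \<Longrightarrow> top_term (p - q) d (a - b)"
  by (simp add: top_term_def)

lemma top_term_monom_mult:
  fixes p :: "'a::comm_semiring_1 poly"
  shows "top_term p d c \<Longrightarrow> top_term (monom a j * p) (d + j) (a * c)"
  by (auto simp: top_term_def coeff_monom_mult)

lemma top_term_one_plus_monom_mult:
  fixes p :: "'a::comm_semiring_1 poly"
  assumes "top_term p d c" "0 < j"
  shows "top_term ((1 + monom 1 j) * p) (d + j) c"
  using top_term_add[OF top_term_above[OF assms(1)] top_term_monom_mult[OF assms(1), of 1 j]]
    assms(2) by (simp add: distrib_right)

lemma Fdown_0: "0 < k \<Longrightarrow> Fdown k 0 = 1"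
  by (simp add: Fdown.simps)

lemma Fdown_eq_0: "0 < m \<Longrightarrow> m < k \<Longrightarrow> Fdown k m = 0"
  by (simp add: Fdown.simps)

lemma Fdown_eq_sum:
  assumes "0 < k"
  shows "Fdown k m = (\<Sum>j<k. monom 1 j * Fdown k (m + k - j))"
proof -
  let ?f = "\<lambda>j. monom 1 j * Fdown k (m + k - j)"
  have "Fdown k (m + k) = Fdown k m - sum_list (map ?f [1..<k])"
    using assms by (subst Fdown.simps) simp
  then have "Fdown k m = ?f 0 + sum ?f {1..<k}"
    by (simp add: sum_set_upt_conv_sum_list_nat[symmetric])
  also have "\<dots> = sum ?f {..<k}"
    using assms by (simp add: lessThan_atLeast0 sum.atLeast_Suc_lessThan)
  finally show ?thesis .
qed

lemma Fdown_k: "0 < k \<Longrightarrow> Fdown k k = 1"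
proof -
  assume k: "0 < k"
  have "Fdown k 0 = (\<Sum>j<k. monom 1 j * Fdown k (k - j))"
    using Fdown_eq_sum[OF k, of 0] by simp
  also have "\<dots> = (\<Sum>j\<in>{0}. monom 1 j * Fdown k (k - j))"
    by (rule sum.mono_neutral_right) (use k in \<open>auto simp: Fdown_eq_0\<close>)
  finally show ?thesis using k by (simp add: Fdown_0)
qed

lemma Fdown_recurrence:
  assumes "0 < k"
  shows "Fdown k (Suc m + k) = (1 + monom 1 k) * Fdown k (Suc m) - monom 1 1 * Fdown k m"
proof -
  let ?f = "\<lambda>j. monom 1 j * Fdown k (Suc m + k - j)"
  have "monom 1 1 * Fdown k m = (\<Sum>j<k. ?f (Suc j))"
    by (subst Fdown_eq_sum[OF assms])
      (simp add: sum_distrib_left mult.assoc[symmetric] mult_monom)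
  then have "Fdown k (Suc m) - monom 1 1 * Fdown k m = (\<Sum>j<k. ?f j - ?f (Suc j))"
    using Fdown_eq_sum[OF assms, of "Suc m"] by (simp add: sum_subtractf)
  also have "\<dots> = ?f 0 - ?f k"
    by (rule sum_lessThan_telescope')
  finally show ?thesis
    by (simp add: algebra_simps)
qed

lemma Fdown_vanish:
  assumes "q < r" "r < k"
  shows "Fdown k (k * q + r) = 0"
  using assms
proof (induction q arbitrary: r)
  case 0
  then show ?case by (simp add: Fdown_eq_0)
next
  case (Suc q)
  then obtain r' where r': "r = Suc r'" "q < r'"
    by (cases r) auto
  have "k * Suc q + r = Suc (k * q + r') + k"
    using r' by simp
  moreover have "Fdown k (Suc (k * q + r')) = 0" "Fdown k (k * q + r') = 0"
    using Suc.IH[of r] Suc.IH[of r'] Suc.prems r' by simp_all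
  moreover have "0 < k"
    using Suc.prems by simp
  ultimately show ?case
    by (simp only: Fdown_recurrence)
qed

lemma top_term_Fdown_recurrence:
  assumes "0 < k" "top_term ((1 + monom 1 k) * Fdown k (Suc m)) (Suc e) a"
    "top_term (Fdown k m) e b"
  shows "top_term (Fdown k (Suc m + k)) (Suc e) (a - b)"
proof -
  have "top_term (monom 1 1 * Fdown k m) (Suc e) b"
    using top_term_monom_mult[OF assms(3), of 1 1] by simp
  from top_term_diff[OF assms(2) this] show ?thesis
    unfolding Fdown_recurrence[OF assms(1)] .
qed

definition top_coeff :: "nat \<Rightarrow> nat \<Rightarrow> int" where
  "top_coeff q r = (if r = 0 then 1 else (-1) ^ r * int ((q - 1) choose (r - 1)))"

lemma top_coeff_Suc:
  assumes "2 \<le> r" "0 < q"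
  shows "top_coeff (Suc q) r = top_coeff q r - top_coeff q (r - 1)"
proof -
  have "q = Suc (q - 1)" "r = Suc (Suc (r - 2))"
    using assms by simp_all
  then obtain i j where "q = Suc i" "r = Suc (Suc j)"
    by blast
  then show ?thesis
    by (simp add: top_coeff_def algebra_simps)
qed

lemma top_coeff_nonzero: "r \<le> q \<Longrightarrow> 0 < q \<Longrightarrow> top_coeff q r \<noteq> 0"
  using diff_le_mono[of r q 1] by (auto simp: top_coeff_def)

lemma top_term_Fdown_rem_0:
  assumes k: "2 \<le> k"
    and hi: "top_term (Fdown k (k * Suc p)) (k * p) 1"
    and lo: "k - 1 \<le> p \<Longrightarrow>
      top_term (Fdown k (k * p + (k - 1))) (k * (p - (k - 1)) + (k - 1)) c"
  shows "top_term (Fdown k (k * Suc (Suc p))) (k * Suc p) 1"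
proof -
  have m: "Suc (k * p + (k - 1)) = k * Suc p"
    using k by simp
  have "top_term (Fdown k (k * p + (k - 1))) (k * p + (k - 1)) 0"
  proof (cases "k - 1 \<le> p")
    case True
    have "k * (p - (k - 1)) < k * p"
      using True k by (intro mult_less_mono2) auto
    then have "k * (p - (k - 1)) + (k - 1) < k * p + (k - 1)"
      by (rule add_less_mono1)
    then show ?thesis
      by (rule top_term_above[OF lo[OF True]])
  qed (use Fdown_vanish[of p "k - 1" k] k in simp)
  moreover have "top_term ((1 + monom 1 k) * Fdown k (Suc (k * p + (k - 1)))) (Suc (k * p + (k - 1))) 1"
    using top_term_one_plus_monom_mult[OF hi, of k] k unfolding m by (simp add: algebra_simps)
  ultimately have "top_term (Fdown k (Suc (k * p + (k - 1)) + k)) (Suc (k * p + (k - 1))) 1"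
    using top_term_Fdown_recurrence[of k] k by fastforce
  then show ?thesis
    unfolding m by (simp add: algebra_simps)
qed

lemma top_term_Fdown_rem_1:
  assumes k: "2 \<le> k"
    and hi: "0 < p \<Longrightarrow> top_term (Fdown k (k * p + 1)) (k * (p - 1) + 1) (-1)"
    and lo: "0 < p \<Longrightarrow> top_term (Fdown k (k * p)) (k * (p - 1)) 1"
  shows "top_term (Fdown k (k * Suc p + 1)) (k * p + 1) (-1)"
proof (cases p)
  case 0
  have "top_term (1 :: int poly) 0 1"
    by (simp add: top_term_def)
  then have "top_term (Fdown k (Suc 0 + k)) (Suc 0) (0 - 1)"
    using top_term_Fdown_recurrence[of k 0 0 0 1] k by (simp add: Fdown_0 Fdown_eq_0)
  then show ?thesis
    using 0 by (simp add: add.commute)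
next
  case (Suc p')
  have "top_term ((1 + monom 1 k) * Fdown k (Suc (k * p))) (Suc (k * p)) (-1)"
    using top_term_one_plus_monom_mult[OF hi, of k] k Suc by (simp add: algebra_simps)
  moreover have "top_term (Fdown k (k * p)) (k * p) 0"
    using top_term_above[OF lo] k Suc by simp
  ultimately have "top_term (Fdown k (Suc (k * p) + k)) (Suc (k * p)) (-1 - 0)"
    using k by (intro top_term_Fdown_recurrence) simp_all
  then show ?thesis
    by (simp add: algebra_simps)
qed

lemma top_term_Fdown_rem_ge_2:
  assumes k: "r < k" and r: "2 \<le> r" "r - 1 \<le> p"
    and hi: "r \<le> p \<Longrightarrow> top_term (Fdown k (k * p + r)) (k * (p - r) + r) (top_coeff p r)"
    and lo: "top_term (Fdown k (k * p + (r - 1))) (k * (p - (r - 1)) + (r - 1)) (top_coeff p (r - 1))"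
  shows "top_term (Fdown k (k * Suc p + r)) (k * (Suc p - r) + r) (top_coeff (Suc p) r)"
proof -
  have m: "Suc (k * p + (r - 1)) = k * p + r"
    using r by simp
  have e: "Suc (k * (p - (r - 1)) + (r - 1)) = k * (Suc p - r) + r"
    using r by (simp add: Suc_diff_le)
  have "top_term ((1 + monom 1 k) * Fdown k (k * p + r)) (k * (Suc p - r) + r) (top_coeff p r)"
  proof (cases "r \<le> p")
    case True
    then have "k * (p - r) + r + k = k * (Suc p - r) + r"
      by (simp add: Suc_diff_le)
    with top_term_one_plus_monom_mult[OF hi[OF True], of k] k show ?thesis
      by simp
  next
    case False
    \<comment> \<open>then p = r - 1: the first summand vanishes, and so does C(r - 2, r - 1)\<close>
    then have "p < r" "top_coeff p r = 0"
      using r by (simp_all add: top_coeff_def)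
    then show ?thesis
      using Fdown_vanish[of p r k] k by simp
  qed
  then have "top_term (Fdown k (Suc (k * p + (r - 1)) + k)) (k * (Suc p - r) + r)
      (top_coeff p r - top_coeff p (r - 1))"
    using top_term_Fdown_recurrence[OF _ _ lo] k unfolding e m by simp
  moreover have "top_coeff p r - top_coeff p (r - 1) = top_coeff (Suc p) r"
    using top_coeff_Suc[of r p] r by simp
  moreover have "Suc (k * p + (r - 1)) + k = k * Suc p + r"
    unfolding m by simp
  ultimately show ?thesis
    by (simp only:)
qed

lemma top_term_Fdown:
  assumes k: "2 \<le> k" and "r < k" "max 1 r \<le> q"
  shows "top_term (Fdown k (k * q + r)) (k * (q - max 1 r) + r) (top_coeff q r)"
  using assms(2,3)
proof (induction q arbitrary: r rule: less_induct)
  case (less q)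
  obtain p where q: "q = Suc p"
    using less.prems by (cases q) auto
  consider "r = 0" | "r = 1" | "2 \<le> r"
    by linarith
  then show ?case
  proof cases
    case r: 1
    show ?thesis
    proof (cases p)
      case 0
      then show ?thesis
        using q r k by (simp add: Fdown_k top_term_def top_coeff_def)
    next
      case (Suc p')
      have hi: "top_term (Fdown k (k * Suc p')) (k * p') 1"
        using less.IH[of p 0] q Suc k by (simp add: top_coeff_def)
      have lo: "top_term (Fdown k (k * p' + (k - 1))) (k * (p' - (k - 1)) + (k - 1))
          (top_coeff p' (k - 1))" if "k - 1 \<le> p'"
        using less.IH[of p' "k - 1"] that q Suc k max_absorb2[of 1 "k - 1"] by simp
      show ?thesis
        using top_term_Fdown_rem_0[OF k hi lo] q r Suc by (simp add: top_coeff_def)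
    qed
  next
    case r: 2
    have hi: "top_term (Fdown k (k * p + 1)) (k * (p - 1) + 1) (-1)" if "0 < p"
      using less.IH[of p 1] that q k by (simp add: top_coeff_def)
    have lo: "top_term (Fdown k (k * p)) (k * (p - 1)) 1" if "0 < p"
      using less.IH[of p 0] that q k by (simp add: top_coeff_def)
    show ?thesis
      using top_term_Fdown_rem_1[OF k hi lo] q r by (simp add: top_coeff_def)
  next
    case r: 3
    show ?thesis
      using top_term_Fdown_rem_ge_2[of r k p] less.IH[of p r] less.IH[of p "r - 1"] less.prems q r
      by simp
  qed
qed

lemma Fdown_leading_term:
  assumes k: "2 \<le> k" and "0 < N"
  defines "s \<equiv> max 1 (N mod k)"
  shows "(Fdown k N = 0 \<longleftrightarrow> N < k * s) \<and>
    (k * s \<le> N \<longrightarrow> degree (Fdown k N) = N - k * s \<and>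
      lead_coeff (Fdown k N) = top_coeff (N div k) (N mod k))"
proof -
  define q r where "q = N div k" and "r = N mod k"
  have N: "N = k * q + r" and "r < k" and s: "s = max 1 r"
    using k by (simp_all add: q_def r_def s_def)
  show ?thesis
  proof (cases "k * s \<le> N")
    case True
    then have "k * s < k * Suc q"
      using N \<open>r < k\<close> by simp
    then have "s \<le> q"
      by (metis mult_less_cancel1 less_Suc_eq_le)
    then have "top_term (Fdown k N) (N - k * s) (top_coeff q r)" "top_coeff q r \<noteq> 0"
      using top_term_Fdown[OF k \<open>r < k\<close>, of q] top_coeff_nonzero[of r q]
      by (simp_all add: N s diff_mult_distrib2)
    then have "degree (Fdown k N) = N - k * s \<and> lead_coeff (Fdown k N) = top_coeff q r"
      by (rule top_term_degree)
    then show ?thesis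
      using True \<open>top_coeff q r \<noteq> 0\<close> by (auto simp: q_def r_def)
  next
    case False
    then have "k * q < k * s"
      using N by linarith
    then have "q < max 1 r"
      using s by simp
    moreover have "r \<noteq> 0 \<or> q \<noteq> 0"
      using N \<open>0 < N\<close> by auto
    ultimately have "q < r"
      by auto
    then show ?thesis
      using False Fdown_vanish[OF _ \<open>r < k\<close>] N by simp
  qed
qed

lemma F_nonpos: "n \<le> 0 \<Longrightarrow> F k n = Fdown k (nat (\<bar>n\<bar> + 1))"
  by (subst F.simps) simp

lemma Fdown_degree_drop:
  assumes "3 \<le> k"
  shows "Fdown k (2 * k + 1) \<noteq> 0" "Fdown k (2 * k + 2) \<noteq> 0"
    "degree (Fdown k (2 * k + 2)) < degree (Fdown k (2 * k + 1))"
proof -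
  have "2 \<le> k"
    using assms by simp
  have "top_term (Fdown k (2 * k + 1)) (k + 1) (-1)"
    using top_term_Fdown[OF \<open>2 \<le> k\<close>, of 1 2] assms by (simp add: top_coeff_def mult.commute)
  then have "degree (Fdown k (2 * k + 1)) = k + 1 \<and> lead_coeff (Fdown k (2 * k + 1)) = -1"
    by (rule top_term_degree) simp
  moreover have "top_term (Fdown k (2 * k + 2)) 2 1"
    using top_term_Fdown[OF \<open>2 \<le> k\<close>, of 2 2] assms
    by (simp add: top_coeff_def mult.commute numeral_2_eq_2)
  then have "degree (Fdown k (2 * k + 2)) = 2 \<and> lead_coeff (Fdown k (2 * k + 2)) = 1"
    by (rule top_term_degree) simp
  ultimately show "Fdown k (2 * k + 1) \<noteq> 0" "Fdown k (2 * k + 2) \<noteq> 0"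
    "degree (Fdown k (2 * k + 2)) < degree (Fdown k (2 * k + 1))"
    using assms by auto
qed

lemma F_leading_term:
  assumes "2 \<le> k" "n \<le> 0"
  defines "N \<equiv> nat (\<bar>n\<bar> + 1)"
  defines "d \<equiv> int N - int k * int (max 1 (N mod k))"
  shows "(F k n = 0 \<longleftrightarrow> d < 0) \<and>
    (d \<ge> 0 \<longrightarrow> degree (F k n) = nat d \<and> lead_coeff (F k n) = top_coeff (N div k) (N mod k))"
proof -
  have "0 < N" "F k n = Fdown k N"
    using F_nonpos[OF assms(2)] by (simp_all add: N_def)
  moreover have "d < 0 \<longleftrightarrow> N < k * max 1 (N mod k)" "d \<ge> 0 \<longleftrightarrow> k * max 1 (N mod k) \<le> N"
    "nat d = N - k * max 1 (N mod k)"
    unfolding d_def by (simp_all flip: of_nat_mult add: nat_diff_distrib')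
  ultimately show ?thesis
    using Fdown_leading_term[OF assms(1)] by (simp only:) blast
qed

lemma F_degree_not_mono:
  assumes "3 \<le> k"
  shows "\<exists>n m :: int. n < 0 \<and> m < 0 \<and> F k n \<noteq> 0 \<and> F k m \<noteq> 0 \<and>
    \<bar>n\<bar> \<le> \<bar>m\<bar> \<and> \<not> degree (F k n) \<le> degree (F k m)"
proof -
  have "F k (- 2 * int k) = Fdown k (2 * k + 1)" "F k (- 2 * int k - 1) = Fdown k (2 * k + 2)"
    by (simp_all add: F_nonpos nat_add_distrib nat_mult_distrib)
  then show ?thesis
    using Fdown_degree_drop[OF assms] assms
    by (intro exI[of _ "- 2 * int k"] exI[of _ "- 2 * int k - 1"]) simp
qed

theorem mainTheorem10:
  fixes k :: nat
  assumes "k \<ge> 2"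
  shows "(\<forall>n::int. n \<le> 0 \<longrightarrow>
           (let N = nat (\<bar>n\<bar> + 1); q = N div k; r = N mod k;
                d = (if r = 0 then int N - int k else int N - int k * int r)
            in (F k n = 0 \<longleftrightarrow> d < 0) \<and>
               (d \<ge> 0 \<longrightarrow>
                  degree (F k n) = nat d \<and>
                  lead_coeff (F k n) =
                    (if r = 0 then 1 else (-1) ^ r * int ((q - 1) choose (r - 1))))))
         \<and> (k \<ge> 3 \<longrightarrow>
              \<not> (\<forall>n m :: int. n < 0 \<longrightarrow> m < 0 \<longrightarrow> F k n \<noteq> 0 \<longrightarrow> F k m \<noteq> 0 \<longrightarrow>
                   \<bar>n\<bar> \<le> \<bar>m\<bar> \<longrightarrow> degree (F k n) \<le> degree (F k m)))"
proof -
  have d: "(if N mod k = 0 then int N - int k else int N - int k * int (N mod k))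
      = int N - int k * int (max 1 (N mod k))" for N
    by simp
  show ?thesis
    using F_leading_term[OF assms] F_degree_not_mono
    unfolding Let_def d top_coeff_def by blast
qed

end
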